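(* Let $K_n$, $L_n$, $C_n$, $K_{1,n-1}$ denote the complete graph, path, cycle and star on $n$ vertices ($L_0$ and $K_0$ are the empty graph, $K_{1,0}=K_1$); their graph-associahedra are the permutohedron $Pe^{n-1}$, associahedron $As^{n-1}$, cyclohedron $Cy^{n-1}$ and stellohedron $St^{n-1}$, with $F(Pe^{n-1})=F_{K_n}$, $F(As^{n-1})=F_{L_n}$, $F(Cy^{n-1})=F_{C_n}$, $F(St^{n-1})=F_{K_{1,n-1}}$. Then $$F_{K_n}=n\,(F_{K_{n-1}})_1\ (n\ge1),\qquad F_{L_n}=\Big(\sum_{k=1}^nF_{L_{k-1}}F_{L_{n-k}}\Big)_1\ (n\ge1),$$ $$F_{C_n}=n\,(F_{L_{n-1}})_1\ (n\ge3),\qquad F_{K_{1,n-1}}=\big((n-1)F_{K_{1,n-2}}+M_{(1)}^{\,n-1}\big)_1\ (n\ge2).$$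
   Context: For a coloring $\lambda:V\to\mathbb{N}=\{1,2,\dots\}$ of a finite simple graph $\Gamma$ with values $i_1<\dots<i_k$, let $I_j=\lambda^{-1}(\{i_1,\dots,i_j\})$, $I_0=\emptyset$. It is ordered if for each $j$, no two distinct vertices $u,w$ with $\lambda(u)=\lambda(w)=i_j$ are joined by a path in $\Gamma$ (possibly a single edge) all of whose internal vertices lie in $I_{j-1}$. $F_\Gamma=\sum_{\lambda\text{ ordered}}\prod_{v\in V}x_{\lambda(v)}$, with $F_\Gamma=1$ for the graph with no vertices. For a composition $\alpha=(a_1,\dots,a_k)$, $M_\alpha=\sum_{i_1<\dots<i_k}x_{i_1}^{a_1}\cdots x_{i_k}^{a_k}$, $M_{()}=1$; $M_{(1)}=\sum_i x_i$. The shifting operator $G\mapsto(G)_1$ is the linear map on quasisymmetric functions with $(M_{(a_1,\dots,a_k)})_1=M_{(a_1,\dots,a_k,1)}$. *)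

theory Defs
  imports Main
begin

(* Monomials in x_1, x_2, ... are exponent vectors  m :: nat => nat  (m i = exponent of x_i;
   index 0 is unused, colours/variables start at 1).  A formal power series (quasisymmetric
   function) is its coefficient function  (nat => nat) => int. *)

type_synonym mono = "nat \<Rightarrow> nat"
type_synonym qsf = "mono \<Rightarrow> int"

(* a finite simple graph on vertices V with symmetric irreflexive adjacency E *)
type_synonym graph = "nat set \<times> (nat \<Rightarrow> nat \<Rightarrow> bool)"

definition joined_in :: "graph \<Rightarrow> nat set \<Rightarrow> nat \<Rightarrow> nat \<Rightarrow> bool" where
  "joined_in G S u w \<longleftrightarrow>
     (\<exists>ps. set ps \<subseteq> S \<inter> fst G \<and> distinct (u # ps @ [w]) \<and> successively (snd G) (u # ps @ [w]))"

(* ordered colouring lam : V -> {1,2,...}; for a colour c = i_j, I_{j-1} = {v. lam v < c} *)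
definition ordered_col :: "graph \<Rightarrow> (nat \<Rightarrow> nat) \<Rightarrow> bool" where
  "ordered_col G lam \<longleftrightarrow>
     (\<forall>v\<in>fst G. 1 \<le> lam v) \<and>
     (\<forall>u\<in>fst G. \<forall>w\<in>fst G. u \<noteq> w \<and> lam u = lam w \<longrightarrow>
        \<not> joined_in G {v\<in>fst G. lam v < lam u} u w)"

definition qsF :: "graph \<Rightarrow> qsf" where
  "qsF G m = int (card {lam. (\<forall>v. v \<notin> fst G \<longrightarrow> lam v = 0) \<and> ordered_col G lam \<and>
                               (\<forall>i. m i = card {v\<in>fst G. lam v = i})})"

definition comp_of :: "mono \<Rightarrow> nat list" where
  "comp_of m = map m (sorted_list_of_set {i. m i \<noteq> 0})"

definition is_monomial :: "mono \<Rightarrow> bool" where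
  "is_monomial m \<longleftrightarrow> m 0 = 0 \<and> finite {i. m i \<noteq> 0}"

definition mono_of :: "nat list \<Rightarrow> mono" where
  "mono_of as = (\<lambda>i. if 1 \<le> i \<and> i \<le> length as then as ! (i - 1) else 0)"

definition qM :: "nat list \<Rightarrow> qsf" where
  "qM as m = (if is_monomial m \<and> comp_of m = as then 1 else 0)"

(* shifting operator: the linear map with (M_(a_1..a_k))_1 = M_(a_1..a_k,1); for a
   quasisymmetric G = sum_alpha G(x_1^{a_1}..x_k^{a_k}) M_alpha this is
   (G)_1 = sum_alpha G(mono_of alpha) M_(alpha@[1]), whose coefficients are: *)
definition shift1 :: "qsf \<Rightarrow> qsf" where
  "shift1 G m = (if is_monomial m \<and> comp_of m \<noteq> [] \<and> last (comp_of m) = 1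
                 then G (mono_of (butlast (comp_of m))) else 0)"

definition qmul :: "qsf \<Rightarrow> qsf \<Rightarrow> qsf" where
  "qmul f g m = (\<Sum>a\<in>{a. \<forall>i. a i \<le> m i}. f a * g (\<lambda>i. m i - a i))"

definition qone :: qsf where
  "qone m = (if m = (\<lambda>_. 0) then 1 else 0)"

definition qpow :: "qsf \<Rightarrow> nat \<Rightarrow> qsf" where
  "qpow f k = (qmul f ^^ k) qone"

definition complete_graph :: "nat \<Rightarrow> graph" where
  "complete_graph n = ({0..<n}, \<lambda>u v. u \<noteq> v)"

definition path_graph :: "nat \<Rightarrow> graph" where
  "path_graph n = ({0..<n}, \<lambda>u v. u + 1 = v \<or> v + 1 = u)"

definition cycle_graph :: "nat \<Rightarrow> graph" where
  "cycle_graph n = ({0..<n}, \<lambda>u v. u \<noteq> v \<and>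
      (u + 1 = v \<or> v + 1 = u \<or> (u = 0 \<and> v = n - 1) \<or> (v = 0 \<and> u = n - 1)))"

definition star_graph :: "nat \<Rightarrow> graph" where
  "star_graph n = ({0..<n}, \<lambda>u v. u \<noteq> v \<and> (u = 0 \<or> v = 0))"

end

theory Submission
  imports Defs
begin

(* In an ordered colouring of a connected graph the largest colour is used exactly once:
   on a path between two vertices carrying it, two consecutive occurrences of that colour
   would be joined through smaller colours.  Recolouring the vertex v that carries it to 0
   is a bijection onto the ordered colourings of Gamma - v, and since the number of ordered
   colourings only depends on the relative order of the colours (quasisymmetry), this gives
   F_Gamma = (sum_v F_(Gamma - v))_1.  The four recursions follow by identifying the
   vertex-deleted graphs: K_n - v = K_(n-1) and C_n - v = L_(n-1); deleting the k-th vertex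
   of L_n leaves the disjoint union of L_(k-1) and L_(n-k), on which F is multiplicative;
   a star minus a leaf is a smaller star, and minus its centre it is edgeless, with
   F = M_(1)^(n-1). *)

section \<open>Ordered colourings of a given weight\<close>

definition col_monomial :: "nat set \<Rightarrow> (nat \<Rightarrow> nat) \<Rightarrow> mono" where
  "col_monomial V lam = (\<lambda>i. card {v\<in>V. lam v = i})"

definition ordered_cols :: "graph \<Rightarrow> mono \<Rightarrow> (nat \<Rightarrow> nat) set" where
  "ordered_cols G m = {lam. (\<forall>v. v \<notin> fst G \<longrightarrow> lam v = 0) \<and> ordered_col G lam \<and>
                            col_monomial (fst G) lam = m}"

lemma qsF_eq_card: "qsF G m = int (card (ordered_cols G m))"
  unfolding qsF_def ordered_cols_def col_monomial_def
  by (intro arg_cong[where f="\<lambda>S. int (card S)"] Collect_cong) (auto simp: fun_eq_iff)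

lemma ordered_cols_iff:
  "lam \<in> ordered_cols (V, E) m \<longleftrightarrow>
     (\<forall>v. v \<notin> V \<longrightarrow> lam v = 0) \<and> ordered_col (V, E) lam \<and> col_monomial V lam = m"
  by (simp add: ordered_cols_def)

lemma ordered_colI:
  assumes "\<And>v. v \<in> V \<Longrightarrow> 1 \<le> lam v"
    and "\<And>u w. u \<in> V \<Longrightarrow> w \<in> V \<Longrightarrow> u \<noteq> w \<Longrightarrow> lam u = lam w \<Longrightarrow>
           joined_in (V, E) {v\<in>V. lam v < lam u} u w \<Longrightarrow> False"
  shows "ordered_col (V, E) lam"
  using assms unfolding ordered_col_def by auto

lemma ordered_colD:
  assumes "ordered_col (V, E) lam"
  shows "v \<in> V \<Longrightarrow> 1 \<le> lam v"
    and "u \<in> V \<Longrightarrow> w \<in> V \<Longrightarrow> u \<noteq> w \<Longrightarrow> lam u = lam w \<Longrightarrow>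
           \<not> joined_in (V, E) {v\<in>V. lam v < lam u} u w"
  using assms unfolding ordered_col_def by auto

lemma ordered_col_cong:
  assumes "\<And>v. v \<in> V \<Longrightarrow> lam v = lam' v"
  shows "ordered_col (V, E) lam \<longleftrightarrow> ordered_col (V, E) lam'"
proof -
  have "{v\<in>V. lam v < lam u} = {v\<in>V. lam' v < lam' u}" if "u \<in> V" for u
    using assms that by auto
  then show ?thesis
    using assms unfolding ordered_col_def by (simp cong: Collect_cong)
qed

lemma col_monomial_cong:
  assumes "\<And>v. v \<in> V \<Longrightarrow> lam v = lam' v"
  shows "col_monomial V lam = col_monomial V lam'"
proof -
  have "{v\<in>V. lam v = i} = {v\<in>V. lam' v = i}" for i
    using assms by auto
  then show ?thesis by (simp add: col_monomial_def)
qed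

lemma col_monomial_Un:
  assumes "finite A" "finite B" "A \<inter> B = {}"
  shows "col_monomial (A \<union> B) lam i = col_monomial A lam i + col_monomial B lam i"
proof -
  have "{v\<in>A \<union> B. lam v = i} = {v\<in>A. lam v = i} \<union> {v\<in>B. lam v = i}" by auto
  then show ?thesis
    unfolding col_monomial_def using assms by (simp add: card_Un_disjoint disjoint_iff)
qed

lemma joined_in_mono:
  assumes "joined_in (V, E) S u w" "S \<inter> V \<subseteq> S' \<inter> V'"
  shows "joined_in (V', E) S' u w"
  using assms unfolding joined_in_def by fastforce

lemma ordered_col_subset:
  assumes "ordered_col (V, E) lam" "A \<subseteq> V"
  shows "ordered_col (A, E) lam"
proof (rule ordered_colI)
  fix u w assume "u \<in> A" "w \<in> A" "u \<noteq> w" "lam u = lam w"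
    and "joined_in (A, E) {v\<in>A. lam v < lam u} u w"
  then show False
    using assms ordered_colD(2)[OF assms(1)] joined_in_mono[of A E _ u w "{v\<in>V. lam v < lam u}" V]
    by blast
qed (use assms ordered_colD(1) in blast)

lemma ordered_cols_support:
  assumes "lam \<in> ordered_cols (V, E) m" "finite V"
  shows "{i. m i \<noteq> 0} = lam ` V"
proof -
  have "m i = card {v\<in>V. lam v = i}" for i
    using assms(1) unfolding ordered_cols_iff col_monomial_def by auto
  moreover have "card {v\<in>V. lam v = i} \<noteq> 0 \<longleftrightarrow> i \<in> lam ` V" for i
    using assms(2) by (auto simp: card_eq_0_iff)
  ultimately show ?thesis by auto
qed

lemma ordered_cols_is_monomial:
  assumes "lam \<in> ordered_cols (V, E) m" "finite V"
  shows "is_monomial m"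
proof -
  have "0 \<notin> lam ` V"
    using assms(1) ordered_colD(1) by (fastforce simp: ordered_cols_iff)
  then show ?thesis
    using ordered_cols_support[OF assms] assms(2) unfolding is_monomial_def by auto
qed

lemma finite_ordered_cols:
  assumes "finite V"
  shows "finite (ordered_cols (V, E) m)"
proof (cases "finite {i. m i \<noteq> 0}")
  case True
  have "ordered_cols (V, E) m \<subseteq>
          {f. \<forall>x. (x \<in> V \<longrightarrow> f x \<in> {i. m i \<noteq> 0}) \<and> (x \<notin> V \<longrightarrow> f x = 0)}"
  proof
    fix lam assume "lam \<in> ordered_cols (V, E) m"
    then show "lam \<in> {f. \<forall>x. (x \<in> V \<longrightarrow> f x \<in> {i. m i \<noteq> 0}) \<and> (x \<notin> V \<longrightarrow> f x = 0)}"
      using ordered_cols_support[OF _ assms] by (auto simp: ordered_cols_iff)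
  qed
  then show ?thesis
    using finite_subset finite_set_of_finite_funs[OF assms True] by blast
next
  case False
  then have "ordered_cols (V, E) m = {}"
    using ordered_cols_support[OF _ assms] assms by (metis equals0I finite_imageI)
  then show ?thesis by simp
qed

section \<open>Quasisymmetry\<close>

lemma strict_mono_on_inv_into:
  fixes f :: "'a::linorder \<Rightarrow> 'b::linorder"
  assumes "strict_mono_on A f"
  shows "strict_mono_on (f ` A) (inv_into A f)"
proof (rule strict_mono_onI)
  fix x y assume "x \<in> f ` A" "y \<in> f ` A" "x < y"
  then obtain a b where "a \<in> A" "b \<in> A" "x = f a" "y = f b" "f a < f b" by blast
  moreover have "inj_on f A" using assms by (rule strict_mono_on_imp_inj_on)
  ultimately show "inv_into A f x < inv_into A f y"
    using strict_mono_on_less[OF assms] by simp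
qed

lemma relabel_in_ordered_cols:
  assumes lam: "lam \<in> ordered_cols (V, E) m" and "finite V"
    and mono: "strict_mono_on S \<phi>" and "{i. m i \<noteq> 0} \<subseteq> S" and "0 \<notin> \<phi> ` S"
    and m'_img: "\<forall>i\<in>S. m' (\<phi> i) = m i" and m'_out: "\<forall>j. j \<notin> \<phi> ` S \<longrightarrow> m' j = 0"
  shows "(\<lambda>v. if v \<in> V then \<phi> (lam v) else 0) \<in> ordered_cols (V, E) m'"
    (is "?lam \<in> _")
proof -
  have ord: "ordered_col (V, E) lam" and m: "col_monomial V lam = m"
    using lam by (simp_all add: ordered_cols_iff)
  have in_S: "lam v \<in> S" if "v \<in> V" for v
    using ordered_cols_support[OF lam \<open>finite V\<close>] assms(4) that by blast
  have inj: "inj_on \<phi> S" using mono by (rule strict_mono_on_imp_inj_on)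
  have "ordered_col (V, E) ?lam"
  proof (rule ordered_colI)
    fix v assume "v \<in> V"
    then show "1 \<le> ?lam v" using in_S \<open>0 \<notin> \<phi> ` S\<close> by (fastforce simp: Suc_le_eq)
  next
    fix u w assume uw: "u \<in> V" "w \<in> V" "u \<noteq> w" "?lam u = ?lam w"
      and "joined_in (V, E) {v\<in>V. ?lam v < ?lam u} u w"
    moreover have "lam u = lam w"
      using uw in_S inj by (auto dest: inj_onD)
    moreover have "{v\<in>V. ?lam v < ?lam u} = {v\<in>V. lam v < lam u}"
      using uw(1) in_S strict_mono_on_less[OF mono] by auto
    ultimately show False using ordered_colD(2)[OF ord] by metis
  qed
  moreover have "col_monomial V ?lam j = m' j" for j
  proof (cases "j \<in> \<phi> ` S")
    case True
    then obtain i where i: "i \<in> S" "j = \<phi> i" by blast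
    then have "{v\<in>V. ?lam v = j} = {v\<in>V. lam v = i}"
      using in_S inj by (auto dest: inj_onD)
    then show ?thesis
      using i m m'_img by (auto simp: col_monomial_def)
  next
    case False
    then have "{v\<in>V. ?lam v = j} = {}" using in_S by auto
    then show ?thesis
      using False m'_out by (simp add: col_monomial_def del: Collect_empty_eq)
  qed
  ultimately show ?thesis by (auto simp: ordered_cols_iff)
qed

lemma qsF_relabel:
  assumes "finite V" and mono: "strict_mono_on T \<psi>" and "0 \<notin> T" "0 \<notin> \<psi> ` T"
    and supp: "{i. m i \<noteq> 0} \<subseteq> \<psi> ` T"
  shows "qsF (V, E) (\<lambda>j. if j \<in> T then m (\<psi> j) else 0) = qsF (V, E) m"
    (is "qsF _ ?m' = _")
proof -
  define \<phi> where "\<phi> = inv_into T \<psi>"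
  have inj: "inj_on \<psi> T" using mono by (rule strict_mono_on_imp_inj_on)
  have \<phi>_mono: "strict_mono_on (\<psi> ` T) \<phi>"
    unfolding \<phi>_def using mono by (rule strict_mono_on_inv_into)
  have \<phi>_img: "\<phi> ` (\<psi> ` T) = T"
    unfolding \<phi>_def using inj by (simp add: image_inv_into_cancel)
  define relabel where
    "relabel (f :: nat \<Rightarrow> nat) lam = (\<lambda>v. if v \<in> V then f (lam v) else (0::nat))" for f lam
  have to_m: "relabel \<psi> lam \<in> ordered_cols (V, E) m" if "lam \<in> ordered_cols (V, E) ?m'" for lam
    unfolding relabel_def
    by (rule relabel_in_ordered_cols[OF that \<open>finite V\<close> mono]) (use assms in auto)
  have to_m': "relabel \<phi> lam \<in> ordered_cols (V, E) ?m'" if "lam \<in> ordered_cols (V, E) m" for lam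
    unfolding relabel_def
    by (rule relabel_in_ordered_cols[OF that \<open>finite V\<close> \<phi>_mono supp])
       (use assms \<phi>_img inj in \<open>auto simp: \<phi>_def f_inv_into_f\<close>)
  have "bij_betw (relabel \<psi>) (ordered_cols (V, E) ?m') (ordered_cols (V, E) m)"
  proof (rule bij_betw_byWitness[where f' = "relabel \<phi>"])
    show "\<forall>lam\<in>ordered_cols (V, E) ?m'. relabel \<phi> (relabel \<psi> lam) = lam"
    proof
      fix lam assume lam: "lam \<in> ordered_cols (V, E) ?m'"
      have "lam v \<in> T" if "v \<in> V" for v
        using ordered_cols_support[OF lam \<open>finite V\<close>] that by (auto split: if_splits)
      then show "relabel \<phi> (relabel \<psi> lam) = lam"
        using lam inj by (auto simp: relabel_def \<phi>_def ordered_cols_iff)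
    qed
    show "\<forall>lam\<in>ordered_cols (V, E) m. relabel \<psi> (relabel \<phi> lam) = lam"
    proof
      fix lam assume lam: "lam \<in> ordered_cols (V, E) m"
      have "lam v \<in> \<psi> ` T" if "v \<in> V" for v
        using ordered_cols_support[OF lam \<open>finite V\<close>] supp that by blast
      then show "relabel \<psi> (relabel \<phi> lam) = lam"
        using lam by (auto simp: relabel_def \<phi>_def ordered_cols_iff f_inv_into_f)
    qed
  qed (use to_m to_m' in auto)
  then show ?thesis
    unfolding qsF_eq_card by (simp add: bij_betw_same_card)
qed

lemma qsF_comp_of:
  assumes "finite V" "is_monomial m"
  shows "qsF (V, E) (mono_of (comp_of m)) = qsF (V, E) m"
proof -
  define cs where "cs = sorted_list_of_set {i. m i \<noteq> 0}"
  define \<psi> where "\<psi> j = cs ! (j - 1)" for j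
  have fin: "finite {i. m i \<noteq> 0}" and "m 0 = 0"
    using assms(2) by (auto simp: is_monomial_def)
  have sorted: "sorted_wrt (<) cs"
    unfolding cs_def by (rule sorted_list_of_set.strict_sorted_key_list_of_set)
  have "strict_mono_on {1..length cs} \<psi>"
  proof (rule strict_mono_onI)
    fix r t assume "r \<in> {1..length cs}" "t \<in> {1..length cs}" "r < t"
    then show "\<psi> r < \<psi> t"
      using sorted_wrt_nth_less[OF sorted, of "r - 1" "t - 1"] by (simp add: \<psi>_def)
  qed
  moreover have "\<psi> ` {1..length cs} = {i. m i \<noteq> 0}"
  proof -
    have "\<psi> ` {1..length cs} = set cs"
    proof
      show "\<psi> ` {1..length cs} \<subseteq> set cs" by (auto simp: \<psi>_def)
      show "set cs \<subseteq> \<psi> ` {1..length cs}"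
      proof
        fix x assume "x \<in> set cs"
        then obtain i where "i < length cs" "x = \<psi> (Suc i)"
          by (auto simp: \<psi>_def in_set_conv_nth)
        then show "x \<in> \<psi> ` {1..length cs}" by force
      qed
    qed
    then show ?thesis using fin by (simp add: cs_def)
  qed
  moreover have "mono_of (comp_of m) = (\<lambda>j. if j \<in> {1..length cs} then m (\<psi> j) else 0)"
    unfolding mono_of_def comp_of_def cs_def[symmetric] \<psi>_def by (auto simp: fun_eq_iff)
  ultimately show ?thesis
    using qsF_relabel[of V "{1..length cs}" \<psi> m E] assms(1) \<open>m 0 = 0\<close> by auto
qed

section \<open>Deleting the vertex of largest colour\<close>

lemma remove_vertex_in_ordered_cols:
  assumes lam: "lam \<in> ordered_cols (V, E) m" and v: "v \<in> V" "lam v = c" and "m c = 1"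
  shows "lam(v := 0) \<in> ordered_cols (V - {v}, E) (m(c := 0))"
proof -
  have m: "m i = card {x\<in>V. lam x = i}" for i
    using lam unfolding ordered_cols_iff col_monomial_def by auto
  have "card {x\<in>V. lam x = c} = 1" using m \<open>m c = 1\<close> by simp
  moreover have "v \<in> {x\<in>V. lam x = c}" using v by simp
  ultimately have top: "{x\<in>V. lam x = c} = {v}" by (metis card_1_singletonE singletonD)
  have "ordered_col (V - {v}, E) lam"
    using lam by (auto simp: ordered_cols_iff intro: ordered_col_subset)
  then have "ordered_col (V - {v}, E) (lam(v := 0))"
    by (subst ordered_col_cong) auto
  moreover have "col_monomial (V - {v}) (lam(v := 0)) i = (m(c := 0)) i" for i
  proof (cases "i = c")
    case True
    then have "{x\<in>V - {v}. (lam(v := 0)) x = i} = {}" using top by auto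
    then show ?thesis using True by (simp add: col_monomial_def del: Collect_empty_eq)
  next
    case False
    then have "{x\<in>V - {v}. (lam(v := 0)) x = i} = {x\<in>V. lam x = i}" using v by auto
    then show ?thesis using False m by (simp add: col_monomial_def)
  qed
  ultimately show ?thesis
    using lam by (auto simp: ordered_cols_iff)
qed

lemma add_vertex_in_ordered_cols:
  assumes lam: "lam \<in> ordered_cols (V - {v}, E) m" and "finite V" "v \<in> V" "0 < c"
    and above: "\<forall>j\<ge>c. m j = 0"
  shows "lam(v := c) \<in> ordered_cols (V, E) (m(c := 1))"
    (is "?lam \<in> _")
proof -
  have ord: "ordered_col (V - {v}, E) lam" and m: "m i = card {x\<in>V - {v}. lam x = i}" for i
    using lam unfolding ordered_cols_iff col_monomial_def by auto
  have below: "lam x < c" if "x \<in> V - {v}" for x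
  proof -
    have "m (lam x) \<noteq> 0"
      using ordered_cols_support[OF lam] \<open>finite V\<close> that by auto
    then show ?thesis using above by (meson not_le)
  qed
  have "ordered_col (V, E) ?lam"
  proof (rule ordered_colI)
    fix x assume "x \<in> V"
    then show "1 \<le> ?lam x" using ordered_colD(1)[OF ord] \<open>0 < c\<close> by auto
  next
    fix u w assume uw: "u \<in> V" "w \<in> V" "u \<noteq> w" "?lam u = ?lam w"
      and joined: "joined_in (V, E) {x\<in>V. ?lam x < ?lam u} u w"
    have "u \<noteq> v" "w \<noteq> v" using uw below by (auto split: if_splits)
    moreover from this have "?lam u = lam u" "lam u < c" using uw(1) below by auto
    moreover have "joined_in (V - {v}, E) {x\<in>V - {v}. lam x < lam u} u w"
      by (rule joined_in_mono[OF joined]) (use \<open>?lam u = lam u\<close> \<open>lam u < c\<close> in auto)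
    ultimately show False using ordered_colD(2)[OF ord] uw by auto
  qed
  moreover have "col_monomial V ?lam i = (m(c := 1)) i" for i
  proof (cases "i = c")
    case True
    then have "{x\<in>V. ?lam x = i} = {v}" using \<open>v \<in> V\<close> below by force
    then show ?thesis using True by (simp add: col_monomial_def)
  next
    case False
    then have "{x\<in>V. ?lam x = i} = {x\<in>V - {v}. lam x = i}" by auto
    then show ?thesis using False m by (simp add: col_monomial_def)
  qed
  ultimately show ?thesis
    using lam \<open>v \<in> V\<close> by (auto simp: ordered_cols_iff)
qed

lemma bij_betw_remove_top_vertex:
  assumes "finite V" "v \<in> V" "0 < c" "m c = 1" "\<forall>j>c. m j = 0"
  shows "bij_betw (\<lambda>lam. lam(v := 0)) {lam \<in> ordered_cols (V, E) m. lam v = c}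
           (ordered_cols (V - {v}, E) (m(c := 0)))"
proof (rule bij_betw_byWitness[where f' = "\<lambda>lam. lam(v := c)"])
  show "\<forall>lam\<in>{lam \<in> ordered_cols (V, E) m. lam v = c}. lam(v := 0, v := c) = lam" by auto
  show "\<forall>lam\<in>ordered_cols (V - {v}, E) (m(c := 0)). lam(v := c, v := 0) = lam"
    by (auto simp: ordered_cols_iff)
  show "(\<lambda>lam. lam(v := 0)) ` {lam \<in> ordered_cols (V, E) m. lam v = c}
          \<subseteq> ordered_cols (V - {v}, E) (m(c := 0))"
    using remove_vertex_in_ordered_cols \<open>v \<in> V\<close> \<open>m c = 1\<close> by auto
  have "\<forall>j\<ge>c. (m(c := 0)) j = 0" "(m(c := 0))(c := 1) = m"
    using assms(4,5) by auto
  then have "lam(v := c) \<in> ordered_cols (V, E) m"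
    if "lam \<in> ordered_cols (V - {v}, E) (m(c := 0))" for lam
    using add_vertex_in_ordered_cols[OF that \<open>finite V\<close> \<open>v \<in> V\<close> \<open>0 < c\<close>] by simp
  then show "(\<lambda>lam. lam(v := c)) ` ordered_cols (V - {v}, E) (m(c := 0))
               \<subseteq> {lam \<in> ordered_cols (V, E) m. lam v = c}"
    by auto
qed

lemma card_ordered_cols_remove_top:
  assumes "finite V" "0 < c" "m c = 1" "\<forall>j>c. m j = 0"
  shows "card (ordered_cols (V, E) m) = (\<Sum>v\<in>V. card (ordered_cols (V - {v}, E) (m(c := 0))))"
proof -
  define P where "P v = {lam \<in> ordered_cols (V, E) m. lam v = c}" for v
  have top: "card {x\<in>V. lam x = c} = 1" if "lam \<in> ordered_cols (V, E) m" for lam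
    using that \<open>m c = 1\<close> by (auto simp: ordered_cols_iff col_monomial_def)
  have union: "ordered_cols (V, E) m = (\<Union>v\<in>V. P v)"
  proof
    show "ordered_cols (V, E) m \<subseteq> (\<Union>v\<in>V. P v)"
    proof
      fix lam assume lam: "lam \<in> ordered_cols (V, E) m"
      then obtain v where "{x\<in>V. lam x = c} = {v}" using top card_1_singletonE by blast
      then show "lam \<in> (\<Union>v\<in>V. P v)" using lam by (auto simp: P_def)
    qed
  qed (auto simp: P_def)
  have disjoint: "P v \<inter> P w = {}" if "v \<in> V" "w \<in> V" "v \<noteq> w" for v w
  proof -
    have "card {v, w} \<le> card {x\<in>V. lam x = c}" if "lam \<in> P v" "lam \<in> P w" for lam
      using that \<open>v \<in> V\<close> \<open>w \<in> V\<close> \<open>finite V\<close> by (intro card_mono) (auto simp: P_def)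
    then show ?thesis using top \<open>v \<noteq> w\<close> by (fastforce simp: P_def)
  qed
  have "finite (P v)" for v
    using finite_ordered_cols[OF \<open>finite V\<close>] by (simp add: P_def)
  then have "card (ordered_cols (V, E) m) = (\<Sum>v\<in>V. card (P v))"
    unfolding union using \<open>finite V\<close> disjoint by (simp add: card_UN_disjoint)
  also have "\<dots> = (\<Sum>v\<in>V. card (ordered_cols (V - {v}, E) (m(c := 0))))"
    unfolding P_def using bij_betw_remove_top_vertex[OF \<open>finite V\<close> _ assms(2-4)]
    by (intro sum.cong refl) (blast intro: bij_betw_same_card)
  finally show ?thesis .
qed

lemma qsF_mono_of_snoc_1:
  assumes "finite V"
  shows "qsF (V, E) (mono_of (a @ [1])) = (\<Sum>v\<in>V. qsF (V - {v}, E) (mono_of a))"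
proof -
  let ?c = "Suc (length a)"
  have "(mono_of (a @ [1])) (?c := 0) = mono_of a"
    by (auto simp: fun_eq_iff mono_of_def nth_append)
  moreover have "mono_of (a @ [1]) ?c = 1" "\<forall>j>?c. mono_of (a @ [1]) j = 0"
    by (auto simp: mono_of_def)
  ultimately show ?thesis
    using card_ordered_cols_remove_top[OF assms, of ?c "mono_of (a @ [1])" E]
    by (simp add: qsF_eq_card)
qed

section \<open>Connected graphs\<close>

lemma sorted_le_last: "sorted xs \<Longrightarrow> x \<in> set xs \<Longrightarrow> x \<le> last xs"
  by (induction xs) (auto intro: order_trans)

lemma last_sorted_list_of_set:
  assumes "finite S" "S \<noteq> {}"
  shows "last (sorted_list_of_set S) = Max S"
proof -
  have "sorted_list_of_set S \<noteq> []" using assms by simp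
  then have "last (sorted_list_of_set S) \<in> S"
    using assms(1) by (metis last_in_set set_sorted_list_of_set)
  then show ?thesis
    using assms sorted_le_last[of "sorted_list_of_set S"] by (intro Max_eqI[symmetric]) auto
qed

definition graph_connected :: "graph \<Rightarrow> bool" where
  "graph_connected G \<longleftrightarrow> (\<forall>u\<in>fst G. \<forall>w\<in>fst G. u \<noteq> w \<longrightarrow> joined_in G (fst G) u w)"

lemma ordered_col_max_unique:
  assumes ord: "ordered_col (V, E) lam" and "graph_connected (V, E)"
    and "u \<in> V" "w \<in> V" "lam u = lam w" and max: "\<forall>x\<in>V. lam x \<le> lam u"
  shows "u = w"
proof (rule ccontr)
  assume "u \<noteq> w"
  then have "joined_in (V, E) V u w"
    using assms unfolding graph_connected_def by simp
  then obtain ps where ps: "set ps \<subseteq> V" "distinct (u # ps @ [w])" "successively E (u # ps @ [w])"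
    unfolding joined_in_def by fastforce
  \<comment> \<open>the first vertex of colour \<open>lam u\<close> after \<open>u\<close> on the path is joined to \<open>u\<close>
     through smaller colours\<close>
  define low where "low x \<longleftrightarrow> lam x < lam u" for x
  define as where "as = takeWhile low (ps @ [w])"
  have "dropWhile low (ps @ [w]) \<noteq> []" using \<open>lam u = lam w\<close> by (simp add: low_def)
  then obtain y bs where y: "dropWhile low (ps @ [w]) = y # bs"
    by (cases "dropWhile low (ps @ [w])") auto
  have "y \<in> V" using ps(1) \<open>w \<in> V\<close> set_dropWhileD[of y low "ps @ [w]"] y by auto
  moreover have "\<not> low y" using hd_dropWhile[of low "ps @ [w]"] y by simp
  ultimately have "lam y = lam u" using max unfolding low_def by (meson le_antisym not_less)
  have path: "u # ps @ [w] = (u # as @ [y]) @ bs"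
    using takeWhile_dropWhile_id[of low "ps @ [w]"] y by (simp add: as_def)
  have "set as \<subseteq> {x\<in>V. lam x < lam u}"
  proof
    fix x assume "x \<in> set as"
    then have "x \<in> set (ps @ [w])" "low x" unfolding as_def by (auto dest: set_takeWhileD)
    then show "x \<in> {x\<in>V. lam x < lam u}" using ps(1) \<open>w \<in> V\<close> by (auto simp: low_def)
  qed
  moreover have "distinct (u # as @ [y])" "successively E (u # as @ [y])"
    using ps(2,3) unfolding path distinct_append successively_append_iff by blast+
  ultimately have "joined_in (V, E) {x\<in>V. lam x < lam u} u y"
    unfolding joined_in_def by auto
  moreover have "u \<noteq> y" using \<open>distinct (u # as @ [y])\<close> by auto
  ultimately show False
    using ordered_colD(2)[OF ord \<open>u \<in> V\<close> \<open>y \<in> V\<close>] \<open>lam y = lam u\<close> by auto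
qed

lemma ordered_cols_comp_of_last:
  assumes lam: "lam \<in> ordered_cols (V, E) m" and "finite V" "V \<noteq> {}" "graph_connected (V, E)"
  shows "comp_of m \<noteq> [] \<and> last (comp_of m) = 1"
proof -
  have ord: "ordered_col (V, E) lam" and m: "m i = card {x\<in>V. lam x = i}" for i
    using lam unfolding ordered_cols_iff col_monomial_def by auto
  have supp: "{i. m i \<noteq> 0} = lam ` V" by (rule ordered_cols_support[OF lam \<open>finite V\<close>])
  define c where "c = Max (lam ` V)"
  have "c \<in> lam ` V"
    unfolding c_def using \<open>finite V\<close> \<open>V \<noteq> {}\<close> by (intro Max_in) auto
  then obtain u where u: "u \<in> V" "lam u = c" by blast
  have max: "\<forall>x\<in>V. lam x \<le> lam u"
    unfolding u(2) c_def using \<open>finite V\<close> by (intro ballI Max_ge) auto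
  have "x = u" if "x \<in> V" "lam x = c" for x
    using ordered_col_max_unique[OF ord assms(4) u(1) that(1)] max that(2) u(2) by simp
  then have "{x\<in>V. lam x = c} = {u}" using u by blast
  then have "m c = 1" by (simp add: m)
  moreover have "last (comp_of m) = m c"
    using \<open>finite V\<close> \<open>V \<noteq> {}\<close> unfolding comp_of_def supp c_def
    by (simp add: last_map last_sorted_list_of_set)
  moreover have "comp_of m \<noteq> []"
    using \<open>finite V\<close> \<open>V \<noteq> {}\<close> unfolding comp_of_def supp by simp
  ultimately show ?thesis by simp
qed

theorem qsF_connected_remove_vertex:
  assumes "finite (fst G)" "fst G \<noteq> {}" "graph_connected G"
  shows "qsF G = shift1 (\<lambda>m. \<Sum>v\<in>fst G. qsF (fst G - {v}, snd G) m)"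
proof (cases G)
  case (Pair V E)
  have "qsF (V, E) m = shift1 (\<lambda>m. \<Sum>v\<in>V. qsF (V - {v}, E) m) m" for m
  proof (cases "is_monomial m \<and> comp_of m \<noteq> [] \<and> last (comp_of m) = 1")
    case True
    then have "comp_of m = butlast (comp_of m) @ [1]" by (metis append_butlast_last_id)
    then have "qsF (V, E) m = qsF (V, E) (mono_of (butlast (comp_of m) @ [1]))"
      using qsF_comp_of assms(1) True Pair by (metis fst_conv)
    also have "\<dots> = (\<Sum>v\<in>V. qsF (V - {v}, E) (mono_of (butlast (comp_of m))))"
      using assms(1) Pair by (intro qsF_mono_of_snoc_1) simp
    finally show ?thesis using True by (simp add: shift1_def)
  next
    case False
    then have "ordered_cols (V, E) m = {}"
      using ordered_cols_is_monomial ordered_cols_comp_of_last assms Pair by fastforce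
    then show ?thesis using False by (auto simp: qsF_eq_card shift1_def)
  qed
  then show ?thesis using Pair by auto
qed

section \<open>Isomorphic graphs\<close>

lemma joined_in_image:
  assumes "joined_in (V, E) S u w" "u \<in> V" "w \<in> V" "inj_on \<sigma> V" "\<sigma> ` V \<subseteq> W"
    and "\<forall>x\<in>V. \<forall>y\<in>V. E x y \<longrightarrow> E' (\<sigma> x) (\<sigma> y)"
  shows "joined_in (W, E') (\<sigma> ` (S \<inter> V)) (\<sigma> u) (\<sigma> w)"
proof -
  obtain ps where ps: "set ps \<subseteq> S \<inter> V" "distinct (u # ps @ [w])" "successively E (u # ps @ [w])"
    using assms(1) unfolding joined_in_def by auto
  have path: "set (u # ps @ [w]) \<subseteq> V" using ps(1) assms(2,3) by auto
  then have "distinct (map \<sigma> (u # ps @ [w]))"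
    unfolding distinct_map using ps(2) inj_on_subset[OF assms(4)] by blast
  moreover have "successively E' (map \<sigma> (u # ps @ [w]))"
    unfolding successively_map by (rule successively_mono[OF ps(3)]) (use path assms(6) in blast)
  moreover have "set (map \<sigma> ps) \<subseteq> \<sigma> ` (S \<inter> V) \<inter> W" using ps(1) assms(5) by auto
  ultimately show ?thesis
    unfolding joined_in_def by (auto intro!: exI[of _ "map \<sigma> ps"])
qed

lemma pullback_in_ordered_cols:
  assumes lam: "lam \<in> ordered_cols (W, E') m" and bij: "bij_betw \<sigma> V W"
    and edges: "\<forall>x\<in>V. \<forall>y\<in>V. E' (\<sigma> x) (\<sigma> y) = E x y"
  shows "(\<lambda>v. if v \<in> V then lam (\<sigma> v) else 0) \<in> ordered_cols (V, E) m"
    (is "?lam \<in> _")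
proof -
  have ord: "ordered_col (W, E') lam" and m: "m i = card {x\<in>W. lam x = i}" for i
    using lam unfolding ordered_cols_iff col_monomial_def by auto
  have inj: "inj_on \<sigma> V" and img: "\<sigma> ` V = W" using bij by (auto simp: bij_betw_def)
  have "ordered_col (V, E) ?lam"
  proof (rule ordered_colI)
    fix v assume "v \<in> V"
    then show "1 \<le> ?lam v" using ordered_colD(1)[OF ord] img by auto
  next
    fix u w assume uw: "u \<in> V" "w \<in> V" "u \<noteq> w" "?lam u = ?lam w"
      and "joined_in (V, E) {v\<in>V. ?lam v < ?lam u} u w"
    then have "joined_in (W, E') (\<sigma> ` ({v\<in>V. ?lam v < ?lam u} \<inter> V)) (\<sigma> u) (\<sigma> w)"
      using inj img edges by (intro joined_in_image) auto
    then have "joined_in (W, E') {x\<in>W. lam x < lam (\<sigma> u)} (\<sigma> u) (\<sigma> w)"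
      by (rule joined_in_mono) (use uw(1) img in auto)
    moreover have "\<sigma> u \<noteq> \<sigma> w" using uw inj by (auto dest: inj_onD)
    ultimately show False
      using ordered_colD(2)[OF ord] uw img by auto
  qed
  moreover have "col_monomial V ?lam i = m i" for i
  proof -
    have "\<sigma> ` {v\<in>V. ?lam v = i} = {x\<in>W. lam x = i}" using img by auto
    then have "card {v\<in>V. ?lam v = i} = card {x\<in>W. lam x = i}"
      using inj by (metis (no_types, lifting) card_image inj_on_subset mem_Collect_eq subsetI)
    then show ?thesis by (simp add: col_monomial_def m)
  qed
  ultimately show ?thesis by (auto simp: ordered_cols_iff)
qed

lemma qsF_iso:
  assumes bij: "bij_betw \<sigma> V W" and edges: "\<forall>x\<in>V. \<forall>y\<in>V. E' (\<sigma> x) (\<sigma> y) = E x y"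
  shows "qsF (V, E) = qsF (W, E')"
proof
  fix m
  define \<tau> where "\<tau> = inv_into V \<sigma>"
  have bij': "bij_betw \<tau> W V" unfolding \<tau>_def using bij by (rule bij_betw_inv_into)
  have \<sigma>\<tau>: "\<sigma> (\<tau> x) = x" if "x \<in> W" for x
    unfolding \<tau>_def using bij that by (simp add: bij_betw_inv_into_right)
  have \<tau>\<sigma>: "\<tau> (\<sigma> v) = v" if "v \<in> V" for v
    unfolding \<tau>_def using bij that by (simp add: bij_betw_inv_into_left)
  have edges': "\<forall>x\<in>W. \<forall>y\<in>W. E (\<tau> x) (\<tau> y) = E' x y"
    using edges bij' \<sigma>\<tau> by (metis bij_betwE)
  define pull where "pull f A lam = (\<lambda>v. if v \<in> A then lam (f v) else (0::nat))"
    for f :: "nat \<Rightarrow> nat" and A lam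
  have "bij_betw (pull \<sigma> V) (ordered_cols (W, E') m) (ordered_cols (V, E) m)"
  proof (rule bij_betw_byWitness[where f' = "pull \<tau> W"])
    show "\<forall>lam\<in>ordered_cols (W, E') m. pull \<tau> W (pull \<sigma> V lam) = lam"
      using \<sigma>\<tau> bij' by (auto simp: pull_def ordered_cols_iff fun_eq_iff bij_betwE)
    show "\<forall>lam\<in>ordered_cols (V, E) m. pull \<sigma> V (pull \<tau> W lam) = lam"
      using \<tau>\<sigma> bij by (auto simp: pull_def ordered_cols_iff fun_eq_iff bij_betwE)
    show "pull \<sigma> V ` ordered_cols (W, E') m \<subseteq> ordered_cols (V, E) m"
      unfolding pull_def using pullback_in_ordered_cols[OF _ bij edges] by blast
    show "pull \<tau> W ` ordered_cols (V, E) m \<subseteq> ordered_cols (W, E') m"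
      unfolding pull_def using pullback_in_ordered_cols[OF _ bij' edges'] by blast
  qed
  then show "qsF (V, E) m = qsF (W, E') m"
    unfolding qsF_eq_card by (simp add: bij_betw_same_card)
qed

section \<open>Disjoint unions and edgeless graphs\<close>

lemma successively_stays_in:
  assumes "successively E (x # xs)" "x \<in> A" "set xs \<subseteq> A \<union> B" "\<forall>a\<in>A. \<forall>b\<in>B. \<not> E a b"
  shows "set xs \<subseteq> A"
  using assms
proof (induction xs arbitrary: x)
  case (Cons y ys)
  then have "y \<in> A" by auto
  with Cons show ?case by auto
qed simp

lemma joined_in_Un_no_edges:
  assumes "joined_in (A \<union> B, E) S u w" "u \<in> A" "w \<in> A \<union> B" "\<forall>a\<in>A. \<forall>b\<in>B. \<not> E a b"
  shows "w \<in> A \<and> joined_in (A, E) S u w"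
proof -
  obtain ps where ps: "set ps \<subseteq> S \<inter> (A \<union> B)" "distinct (u # ps @ [w])"
      "successively E (u # ps @ [w])"
    using assms(1) unfolding joined_in_def by auto
  have "set (ps @ [w]) \<subseteq> A"
    by (rule successively_stays_in[OF _ assms(2) _ assms(4)]) (use ps(1,3) assms(3) in auto)
  then show ?thesis using ps unfolding joined_in_def by auto
qed

lemma ordered_col_Un:
  assumes "A \<inter> B = {}" and no_edges: "\<forall>a\<in>A. \<forall>b\<in>B. \<not> E a b \<and> \<not> E b a"
    and ord1: "ordered_col (A, E) l1" and ord2: "ordered_col (B, E) l2"
  shows "ordered_col (A \<union> B, E) (\<lambda>v. if v \<in> A then l1 v else l2 v)"
    (is "ordered_col _ ?lam")
proof (rule ordered_colI)
  fix v assume "v \<in> A \<union> B"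
  then show "1 \<le> ?lam v" using ordered_colD(1)[OF ord1] ordered_colD(1)[OF ord2] by auto
next
  fix u w assume uw: "u \<in> A \<union> B" "w \<in> A \<union> B" "u \<noteq> w" "?lam u = ?lam w"
    and joined: "joined_in (A \<union> B, E) {v\<in>A \<union> B. ?lam v < ?lam u} u w"
  show False
  proof (cases "u \<in> A")
    case True
    have "w \<in> A \<and> joined_in (A, E) {v\<in>A \<union> B. ?lam v < ?lam u} u w"
      by (rule joined_in_Un_no_edges[OF joined True uw(2)]) (use no_edges in blast)
    then have "w \<in> A" and joined_A: "joined_in (A, E) {v\<in>A \<union> B. ?lam v < ?lam u} u w"
      by auto
    moreover have "joined_in (A, E) {v\<in>A. l1 v < l1 u} u w"
      by (rule joined_in_mono[OF joined_A]) (use True in auto)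
    ultimately show False using ordered_colD(2)[OF ord1] True uw by auto
  next
    case False
    then have "u \<in> B" using uw(1) by auto
    have "joined_in (B \<union> A, E) {v\<in>A \<union> B. ?lam v < ?lam u} u w"
      using joined by (simp add: Un_commute)
    then have "w \<in> B \<and> joined_in (B, E) {v\<in>A \<union> B. ?lam v < ?lam u} u w"
      by (rule joined_in_Un_no_edges[OF _ \<open>u \<in> B\<close>]) (use uw(2) no_edges in auto)
    then have "w \<in> B" and joined_B: "joined_in (B, E) {v\<in>A \<union> B. ?lam v < ?lam u} u w"
      by auto
    moreover have "joined_in (B, E) {v\<in>B. l2 v < l2 u} u w"
      by (rule joined_in_mono[OF joined_B]) (use False \<open>A \<inter> B = {}\<close> in auto)
    moreover have "w \<notin> A" using \<open>w \<in> B\<close> \<open>A \<inter> B = {}\<close> by auto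
    ultimately show False
      using ordered_colD(2)[OF ord2] False \<open>u \<in> B\<close> uw by auto
  qed
qed

lemma restrict_in_ordered_cols:
  assumes "lam \<in> ordered_cols (V, E) m" "A \<subseteq> V"
  shows "(\<lambda>v. if v \<in> A then lam v else 0) \<in> ordered_cols (A, E) (col_monomial A lam)"
proof -
  have "ordered_col (A, E) lam"
    using assms by (auto simp: ordered_cols_iff intro: ordered_col_subset)
  then have "ordered_col (A, E) (\<lambda>v. if v \<in> A then lam v else 0)"
    by (subst ordered_col_cong) auto
  moreover have "col_monomial A (\<lambda>v. if v \<in> A then lam v else 0) = col_monomial A lam"
    by (rule col_monomial_cong) simp
  ultimately show ?thesis by (simp add: ordered_cols_iff)
qed

lemma glue_in_ordered_cols:
  assumes "finite A" "finite B" "A \<inter> B = {}" "\<forall>a\<in>A. \<forall>b\<in>B. \<not> E a b \<and> \<not> E b a"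
    and l1: "l1 \<in> ordered_cols (A, E) m1" and l2: "l2 \<in> ordered_cols (B, E) m2"
  shows "(\<lambda>v. if v \<in> A then l1 v else l2 v) \<in> ordered_cols (A \<union> B, E) (\<lambda>i. m1 i + m2 i)"
    (is "?lam \<in> _")
proof -
  have "ordered_col (A \<union> B, E) ?lam"
    using ordered_col_Un assms l1 l2 by (simp add: ordered_cols_iff)
  moreover have "col_monomial (A \<union> B) ?lam i = m1 i + m2 i" for i
  proof -
    have "col_monomial A ?lam = m1" "col_monomial B ?lam = m2"
      using l1 l2 \<open>A \<inter> B = {}\<close> by (auto simp: ordered_cols_iff intro!: col_monomial_cong)
    then show ?thesis using col_monomial_Un[OF assms(1-3)] by metis
  qed
  ultimately show ?thesis using l1 l2 by (auto simp: ordered_cols_iff)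
qed

lemma finite_pointwise_below_iff:
  fixes m :: "nat \<Rightarrow> nat"
  shows "finite {a. \<forall>i. a i \<le> m i} \<longleftrightarrow> finite {i. m i \<noteq> 0}"
proof
  assume fin: "finite {a. \<forall>i. a i \<le> m i}"
  define e where "e (i::nat) = (\<lambda>j. if j = i then 1 else (0::nat))" for i
  have "inj e" by (auto simp: inj_def e_def fun_eq_iff)
  moreover have "e ` {i. m i \<noteq> 0} \<subseteq> {a. \<forall>i. a i \<le> m i}" by (auto simp: e_def)
  ultimately show "finite {i. m i \<noteq> 0}"
    using fin by (meson finite_imageD finite_subset inj_on_subset subset_UNIV)
next
  assume fin: "finite {i. m i \<noteq> 0}"
  have "{a. \<forall>i. a i \<le> m i} \<subseteq>
          {a. \<forall>i. (i \<in> {i. m i \<noteq> 0} \<longrightarrow> a i \<in> {..Max (range m)}) \<and> (i \<notin> {i. m i \<noteq> 0} \<longrightarrow> a i = 0)}"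
  proof -
    have "range m \<subseteq> insert 0 (m ` {i. m i \<noteq> 0})" by auto
    then have "finite (range m)" using fin finite_subset by blast
    then have "m i \<le> Max (range m)" for i by (simp add: Max_ge)
    then show ?thesis by (auto intro: le_trans) (metis le_zero_eq)
  qed
  then show "finite {a. \<forall>i. a i \<le> m i}"
    by (rule finite_subset) (rule finite_set_of_finite_funs[OF fin finite_atMost])
qed

lemma bij_betw_ordered_cols_Un:
  assumes "finite A" "finite B" "A \<inter> B = {}" "\<forall>a\<in>A. \<forall>b\<in>B. \<not> E a b \<and> \<not> E b a"
  shows "bij_betw
           (\<lambda>lam. (col_monomial A lam, (\<lambda>v. if v \<in> A then lam v else 0),
                                     (\<lambda>v. if v \<in> B then lam v else 0)))
           (ordered_cols (A \<union> B, E) m)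
           (SIGMA a:{a. \<forall>i. a i \<le> m i}.
              ordered_cols (A, E) a \<times> ordered_cols (B, E) (\<lambda>i. m i - a i))"
    (is "bij_betw ?decompose _ ?pieces")
proof (rule bij_betw_byWitness[where f' = "\<lambda>(a, l1, l2) v. if v \<in> A then l1 v else l2 v"])
  show "\<forall>lam\<in>ordered_cols (A \<union> B, E) m.
          (\<lambda>(a, l1, l2) v. if v \<in> A then l1 v else l2 v) (?decompose lam) = lam"
    by (auto simp: ordered_cols_iff fun_eq_iff)
  show "\<forall>p\<in>?pieces. ?decompose ((\<lambda>(a, l1, l2) v. if v \<in> A then l1 v else l2 v) p) = p"
  proof
    fix p assume "p \<in> ?pieces"
    then obtain a l1 l2 where p: "p = (a, l1, l2)" "l1 \<in> ordered_cols (A, E) a"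
      "l2 \<in> ordered_cols (B, E) (\<lambda>i. m i - a i)"
      by auto
    then have "col_monomial A (\<lambda>v. if v \<in> A then l1 v else l2 v) = a"
      by (auto simp: ordered_cols_iff intro: col_monomial_cong)
    with p \<open>A \<inter> B = {}\<close> show "?decompose ((\<lambda>(a, l1, l2) v. if v \<in> A then l1 v else l2 v) p) = p"
      by (auto simp: ordered_cols_iff fun_eq_iff)
  qed
  show "?decompose ` ordered_cols (A \<union> B, E) m \<subseteq> ?pieces"
  proof (rule image_subsetI)
    fix lam assume lam: "lam \<in> ordered_cols (A \<union> B, E) m"
    then have "m i = col_monomial A lam i + col_monomial B lam i" for i
      using col_monomial_Un[OF assms(1-3)] by (auto simp: ordered_cols_iff)
    then have "\<forall>i. col_monomial A lam i \<le> m i"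
      "col_monomial B lam = (\<lambda>i. m i - col_monomial A lam i)"
      by auto
    then show "?decompose lam \<in> ?pieces"
      using restrict_in_ordered_cols[OF lam, of A] restrict_in_ordered_cols[OF lam, of B] by simp
  qed
  show "(\<lambda>(a, l1, l2) v. if v \<in> A then l1 v else l2 v) ` ?pieces \<subseteq> ordered_cols (A \<union> B, E) m"
  proof (rule image_subsetI)
    fix p assume "p \<in> ?pieces"
    then obtain a l1 l2 where p: "p = (a, l1, l2)" "\<forall>i. a i \<le> m i" "l1 \<in> ordered_cols (A, E) a"
      "l2 \<in> ordered_cols (B, E) (\<lambda>i. m i - a i)"
      by auto
    then have "(\<lambda>i. a i + (m i - a i)) = m" by (auto simp: fun_eq_iff)
    then show "(\<lambda>(a, l1, l2) v. if v \<in> A then l1 v else l2 v) p \<in> ordered_cols (A \<union> B, E) m"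
      using glue_in_ordered_cols[OF assms p(3,4)] by (simp add: p(1))
  qed
qed

theorem qsF_Un:
  assumes "finite A" "finite B" "A \<inter> B = {}" "\<forall>a\<in>A. \<forall>b\<in>B. \<not> E a b \<and> \<not> E b a"
  shows "qsF (A \<union> B, E) = qmul (qsF (A, E)) (qsF (B, E))"
proof
  fix m :: mono
  show "qsF (A \<union> B, E) m = qmul (qsF (A, E)) (qsF (B, E)) m"
  proof (cases "finite {i. m i \<noteq> 0}")
    case False
    then have "ordered_cols (A \<union> B, E) m = {}"
      using ordered_cols_support[of _ "A \<union> B" E m] assms(1,2)
      by (metis equals0I finite_UnI finite_imageI)
    \<comment> \<open>\<open>qmul\<close> then sums over an infinite set, which yields 0\<close>
    moreover have "infinite {a. \<forall>i. a i \<le> m i}"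
      using False by (simp add: finite_pointwise_below_iff)
    ultimately show ?thesis by (simp add: qsF_eq_card qmul_def)
  next
    case True
    then have "finite {a. \<forall>i. a i \<le> m i}" by (simp add: finite_pointwise_below_iff)
    then have "card (ordered_cols (A \<union> B, E) m) =
                 (\<Sum>a | \<forall>i. a i \<le> m i.
                    card (ordered_cols (A, E) a) * card (ordered_cols (B, E) (\<lambda>i. m i - a i)))"
      using bij_betw_same_card[OF bij_betw_ordered_cols_Un[OF assms]] finite_ordered_cols assms(1,2)
      by (simp add: card_cartesian_product)
    then show ?thesis by (simp add: qsF_eq_card qmul_def)
  qed
qed

lemma qsF_empty: "qsF ({}, E) = qone"
proof
  fix m
  have "ordered_cols ({}, E) m = (if m = (\<lambda>_. 0) then {\<lambda>_. 0} else {})"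
    by (auto simp: ordered_cols_iff ordered_col_def col_monomial_def fun_eq_iff)
  then show "qsF ({}, E) m = qone m" by (simp add: qsF_eq_card qone_def)
qed

lemma zero_notin_comp_of: "0 \<notin> set (comp_of m)"
  unfolding comp_of_def
  by (cases "finite {i. m i \<noteq> 0}") auto

lemma mono_of_eq_zero_iff:
  assumes "0 \<notin> set bs"
  shows "mono_of bs = (\<lambda>_. 0) \<longleftrightarrow> bs = []"
proof
  assume "mono_of bs = (\<lambda>_. 0)"
  then have "mono_of bs 1 = 0" by simp
  then show "bs = []" using assms by (cases bs) (auto simp: mono_of_def)
qed (simp add: mono_of_def fun_eq_iff)

lemma shift1_qone: "shift1 qone = qM [1]"
proof
  fix m
  show "shift1 qone m = qM [1] m"
  proof (cases "is_monomial m \<and> comp_of m \<noteq> [] \<and> last (comp_of m) = 1")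
    case True
    then have "butlast (comp_of m) = [] \<longleftrightarrow> comp_of m = [1]"
      by (metis append_butlast_last_id append_Nil butlast.simps(2))
    moreover have "0 \<notin> set (butlast (comp_of m))"
      using zero_notin_comp_of in_set_butlastD by metis
    ultimately show ?thesis
      using True by (simp add: shift1_def qone_def qM_def mono_of_eq_zero_iff)
  next
    case False
    then show ?thesis by (auto simp: shift1_def qM_def)
  qed
qed

lemma qsF_singleton: "qsF ({x}, E) = qM [1]"
proof -
  have "graph_connected ({x}, E)" by (simp add: graph_connected_def)
  then have "qsF ({x}, E) = shift1 (\<lambda>m. \<Sum>v\<in>{x}. qsF ({x} - {v}, E) m)"
    by (subst qsF_connected_remove_vertex) auto
  then show ?thesis by (simp add: qsF_empty shift1_qone)
qed

lemma qsF_edgeless: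
  assumes "finite A" "\<forall>x\<in>A. \<forall>y\<in>A. \<not> E x y"
  shows "qsF (A, E) = qpow (qM [1]) (card A)"
  using assms
proof (induction A rule: finite_induct)
  case empty
  show ?case by (simp add: qsF_empty qpow_def)
next
  case (insert x A)
  have "qsF (insert x A, E) = qmul (qsF ({x}, E)) (qsF (A, E))"
    using qsF_Un[of "{x}" A E] insert by simp
  also have "\<dots> = qpow (qM [1]) (card (insert x A))"
    using insert by (simp add: qsF_singleton qpow_def)
  finally show ?case .
qed

section \<open>The four families\<close>

lemma joined_in_sym:
  assumes "symp E" "joined_in (V, E) S u w"
  shows "joined_in (V, E) S w u"
proof -
  obtain ps where ps: "set ps \<subseteq> S \<inter> V" "distinct (u # ps @ [w])" "successively E (u # ps @ [w])"
    using assms(2) unfolding joined_in_def by auto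
  have "rev (u # ps @ [w]) = w # rev ps @ [u]" by simp
  moreover have "successively E (rev (u # ps @ [w]))"
    using ps(3) assms(1) by (simp add: symp_def del: rev.simps) (metis (no_types) successively_mono)
  ultimately show ?thesis
    using ps unfolding joined_in_def by (metis distinct_rev set_rev fst_conv snd_conv)
qed

lemma successively_upt:
  assumes "\<And>i. a \<le> i \<Longrightarrow> Suc i < b \<Longrightarrow> E i (Suc i)"
  shows "successively E [a..<b]"
  unfolding successively_conv_nth using assms by (auto simp del: upt_Suc simp add: nth_upt)

lemma graph_connected_consecutive:
  assumes "symp E" "\<And>i. Suc i < n \<Longrightarrow> E i (Suc i)"
  shows "graph_connected ({0..<n}, E)"
proof -
  have "joined_in ({0..<n}, E) {0..<n} u w" if "u < w" "w < n" for u w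
  proof -
    have path: "u # [Suc u..<w] @ [w] = [u..<Suc w]" using that(1) by (simp add: upt_conv_Cons)
    show ?thesis
      unfolding joined_in_def
    proof (intro exI[of _ "[Suc u..<w]"] conjI)
      show "set [Suc u..<w] \<subseteq> {0..<n} \<inter> fst ({0..<n}, E)" using that by auto
      show "distinct (u # [Suc u..<w] @ [w])" unfolding path by simp
      show "successively (snd ({0..<n}, E)) (u # [Suc u..<w] @ [w])"
        unfolding path snd_conv by (rule successively_upt) (use assms(2) that in auto)
    qed
  qed
  then show ?thesis
    unfolding graph_connected_def using joined_in_sym[OF assms(1)]
    by (metis atLeastLessThan_iff fst_conv linorder_neqE_nat)
qed

lemma graph_connected_star: "graph_connected (star_graph n)"
proof -
  have "joined_in (star_graph n) {0..<n} u w" if "u < n" "w < n" "u \<noteq> w" for u w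
  proof (cases "u = 0 \<or> w = 0")
    case True
    then show ?thesis
      using that unfolding joined_in_def star_graph_def by (intro exI[of _ "[]"]) auto
  next
    case False
    then show ?thesis
      using that unfolding joined_in_def star_graph_def by (intro exI[of _ "[0]"]) auto
  qed
  then show ?thesis by (simp add: graph_connected_def star_graph_def)
qed

lemma bij_betw_skip:
  assumes "v < n"
  shows "bij_betw (\<lambda>x. if x < v then x else Suc x) {0..<n - 1} ({0..<n} - {v})"
  by (rule bij_betw_byWitness[where f' = "\<lambda>y. if y < v then y else y - 1"]) (use assms in auto)

lemma shift1_scale: "shift1 (\<lambda>m. c * f m) = (\<lambda>m. c * shift1 f m)"
  by (auto simp: shift1_def fun_eq_iff)

lemma qsF_complete_graph:
  assumes "1 \<le> n"
  shows "qsF (complete_graph n) = (\<lambda>m. int n * shift1 (qsF (complete_graph (n - 1))) m)"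
proof -
  have "graph_connected (complete_graph n)"
    unfolding complete_graph_def by (rule graph_connected_consecutive) (auto simp: symp_def)
  then have "qsF (complete_graph n) =
               shift1 (\<lambda>m. \<Sum>v\<in>{0..<n}. qsF ({0..<n} - {v}, snd (complete_graph n)) m)"
    using assms by (subst qsF_connected_remove_vertex) (auto simp: complete_graph_def)
  also have "\<dots> = shift1 (\<lambda>m. \<Sum>v\<in>{0..<n}. qsF (complete_graph (n - 1)) m)"
  proof (intro arg_cong[where f = shift1] ext sum.cong refl)
    fix v m assume "v \<in> {0..<n}"
    then show "qsF ({0..<n} - {v}, snd (complete_graph n)) m = qsF (complete_graph (n - 1)) m"
      unfolding complete_graph_def by (subst qsF_iso[OF bij_betw_skip, symmetric]) auto
  qed
  finally show ?thesis by (simp add: shift1_scale)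
qed

lemma qsF_path_remove_vertex:
  assumes "v < n"
  shows "qsF ({0..<n} - {v}, snd (path_graph n)) =
           qmul (qsF (path_graph v)) (qsF (path_graph (n - Suc v)))"
proof -
  define E where "E = snd (path_graph n)"
  have "{0..<n} - {v} = {0..<v} \<union> {Suc v..<n}" using assms by auto
  then have "qsF ({0..<n} - {v}, E) = qmul (qsF ({0..<v}, E)) (qsF ({Suc v..<n}, E))"
    by (simp add: qsF_Un E_def path_graph_def)
  moreover have "qsF ({0..<n - Suc v}, E) = qsF ({Suc v..<n}, E)"
    by (rule qsF_iso[where \<sigma> = "\<lambda>x. x + Suc v"])
       (auto simp: E_def path_graph_def intro!: bij_betw_byWitness[where f' = "\<lambda>y. y - Suc v"])
  ultimately show ?thesis by (simp add: E_def path_graph_def)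
qed

lemma qsF_path_graph:
  assumes "1 \<le> n"
  shows "qsF (path_graph n) =
           shift1 (\<lambda>m. \<Sum>k=1..n. qmul (qsF (path_graph (k - 1))) (qsF (path_graph (n - k))) m)"
proof -
  have "graph_connected (path_graph n)"
    unfolding path_graph_def by (rule graph_connected_consecutive) (auto simp: symp_def)
  then have "qsF (path_graph n) =
               shift1 (\<lambda>m. \<Sum>v\<in>{0..<n}. qsF ({0..<n} - {v}, snd (path_graph n)) m)"
    using assms by (subst qsF_connected_remove_vertex) (auto simp: path_graph_def)
  also have "\<dots> =
      shift1 (\<lambda>m. \<Sum>v\<in>{0..<n}. qmul (qsF (path_graph v)) (qsF (path_graph (n - Suc v))) m)"
    by (intro arg_cong[where f = shift1] ext sum.cong refl) (simp add: qsF_path_remove_vertex)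
  also have "\<dots> = shift1 (\<lambda>m. \<Sum>k=1..n. qmul (qsF (path_graph (k - 1))) (qsF (path_graph (n - k))) m)"
    by (simp add: sum.atLeast1_atMost_eq atLeast0LessThan)
  finally show ?thesis .
qed

lemma qsF_cycle_remove_vertex:
  assumes "3 \<le> n" "v < n"
  shows "qsF ({0..<n} - {v}, snd (cycle_graph n)) = qsF (path_graph (n - 1))"
proof -
  \<comment> \<open>rotation of the path \<open>0, \<dots>, n - 2\<close> onto \<open>v + 1, \<dots>, n - 1, 0, \<dots>, v - 1\<close>\<close>
  define \<sigma> where "\<sigma> x = (if x + v + 1 < n then x + v + 1 else x + v + 1 - n)" for x
  define \<tau> where "\<tau> y = (if v < y then y - v - 1 else y + n - v - 1)" for y
  have "bij_betw \<sigma> {0..<n - 1} ({0..<n} - {v})"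
    by (rule bij_betw_byWitness[where f' = \<tau>]) (use assms in \<open>auto simp: \<sigma>_def \<tau>_def\<close>)
  moreover have "snd (cycle_graph n) (\<sigma> x) (\<sigma> y) = snd (path_graph (n - 1)) x y"
    if "x < n - 1" "y < n - 1" for x y
    using that assms unfolding \<sigma>_def cycle_graph_def path_graph_def
    by (cases "x + v + 1 < n"; cases "y + v + 1 < n") (simp_all; arith)+
  ultimately show ?thesis
    unfolding path_graph_def by (subst qsF_iso[symmetric]) auto
qed

lemma qsF_cycle_graph:
  assumes "3 \<le> n"
  shows "qsF (cycle_graph n) = (\<lambda>m. int n * shift1 (qsF (path_graph (n - 1))) m)"
proof -
  have "graph_connected (cycle_graph n)"
    unfolding cycle_graph_def by (rule graph_connected_consecutive) (auto simp: symp_def)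
  then have "qsF (cycle_graph n) =
               shift1 (\<lambda>m. \<Sum>v\<in>{0..<n}. qsF ({0..<n} - {v}, snd (cycle_graph n)) m)"
    using assms by (subst qsF_connected_remove_vertex) (auto simp: cycle_graph_def)
  also have "\<dots> = shift1 (\<lambda>m. \<Sum>v\<in>{0..<n}. qsF (path_graph (n - 1)) m)"
    using assms
    by (intro arg_cong[where f = shift1] ext sum.cong refl) (simp add: qsF_cycle_remove_vertex)
  finally show ?thesis by (simp add: shift1_scale)
qed

lemma qsF_star_graph:
  assumes "2 \<le> n"
  shows "qsF (star_graph n) =
           shift1 (\<lambda>m. int (n - 1) * qsF (star_graph (n - 1)) m + qpow (qM [1]) (n - 1) m)"
proof -
  define E where "E = snd (star_graph n)"
  have leaf: "qsF ({0..<n} - {v}, E) = qsF (star_graph (n - 1))" if "v \<in> {1..<n}" for v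
    unfolding E_def star_graph_def
    by (rule qsF_iso[OF bij_betw_skip, symmetric]) (use that in auto)
  have "{0..<n} - {0} = {1..<n}" by auto
  then have centre: "qsF ({0..<n} - {0}, E) = qpow (qM [1]) (n - 1)"
    using qsF_edgeless[of "{1..<n}" E] by (simp add: E_def star_graph_def)
  have "qsF (star_graph n) = shift1 (\<lambda>m. \<Sum>v\<in>{0..<n}. qsF ({0..<n} - {v}, E) m)"
    using graph_connected_star[of n] assms
    by (subst qsF_connected_remove_vertex) (auto simp: E_def star_graph_def)
  also have "\<dots> = shift1 (\<lambda>m. qsF ({0..<n} - {0}, E) m + (\<Sum>v\<in>{1..<n}. qsF ({0..<n} - {v}, E) m))"
    using assms by (simp add: sum.atLeast_Suc_lessThan)
  also have "\<dots> = shift1 (\<lambda>m. int (n - 1) * qsF (star_graph (n - 1)) m + qpow (qM [1]) (n - 1) m)"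
    using leaf centre by (simp add: add.commute)
  finally show ?thesis .
qed

theorem mainTheorem16:
  shows "(\<forall>n\<ge>1. qsF (complete_graph n) =
            (\<lambda>m. int n * shift1 (qsF (complete_graph (n - 1))) m))
       \<and> (\<forall>n\<ge>1. qsF (path_graph n) =
            shift1 (\<lambda>m. \<Sum>k=1..n. qmul (qsF (path_graph (k - 1))) (qsF (path_graph (n - k))) m))
       \<and> (\<forall>n\<ge>3. qsF (cycle_graph n) =
            (\<lambda>m. int n * shift1 (qsF (path_graph (n - 1))) m))
       \<and> (\<forall>n\<ge>2. qsF (star_graph n) =
            shift1 (\<lambda>m. int (n - 1) * qsF (star_graph (n - 1)) m + qpow (qM [1]) (n - 1) m))"
  using qsF_complete_graph qsF_path_graph qsF_cycle_graph qsF_star_graph by blast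

end
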